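(* Let $M$ be a unit speed curve $\gamma: I\to\mathbb{R}^3$ with arc-length parameter $s$, curvature $\kappa(s)\neq 0$ and torsion $\tau(s)$, and put $\varphi(s) = \int_0^s \tau(t)\,dt + \varphi_0$ for a constant $\varphi_0$. Let $K$ be a curve $\beta$, parametrized by the same arc-length parameter $s$, with $\beta''(s) = \overline{\kappa}(s)\gamma'(s)$, whose curvature and torsion are $\overline{\kappa}(s) = \kappa(s)\cos\varphi(s)$ and $\overline{\tau}(s) = \kappa(s)\sin\varphi(s)$. Then: (i) $K$ is a Mannheim curve if and only if $\kappa(s) = R\cos\left(\int_0^s\tau(t)\,dt+\varphi_0\right)$ for some constant $R$; (ii) $K$ is a $B$-Mannheim curve if and only if $\kappa(s) = R\sin\left(\int_0^s\tau(t)\,dt+\varphi_0\right)$ for some constant $R$.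
   Context: A curve with curvature $\overline{\kappa}$ and torsion $\overline{\tau}$ is a Mannheim curve if $\overline{\kappa}^2+\overline{\tau}^2 = c\,\overline{\kappa}$ for some nonzero real constant $c$ (equivalently $\overline{\kappa} = \lambda(\overline{\kappa}^2+\overline{\tau}^2)$ with $\lambda = 1/c$ constant), and a $B$-Mannheim curve if $\overline{\kappa}^2+\overline{\tau}^2 = c\,\overline{\tau}$ for some nonzero real constant $c$. *)

theory Defs
  imports "HOL-Analysis.Analysis"
begin

definition oint :: "real \<Rightarrow> real \<Rightarrow> (real \<Rightarrow> real) \<Rightarrow> real" where
  "oint a b f = (if a \<le> b then integral {a..b} f else - integral {b..a} f)"

definition mannheim_curve :: "real set \<Rightarrow> (real \<Rightarrow> real) \<Rightarrow> (real \<Rightarrow> real) \<Rightarrow> bool" where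
  "mannheim_curve I kb tb \<longleftrightarrow> (\<exists>c. c \<noteq> 0 \<and> (\<forall>s\<in>I. (kb s)^2 + (tb s)^2 = c * kb s))"

definition B_mannheim_curve :: "real set \<Rightarrow> (real \<Rightarrow> real) \<Rightarrow> (real \<Rightarrow> real) \<Rightarrow> bool" where
  "B_mannheim_curve I kb tb \<longleftrightarrow> (\<exists>c. c \<noteq> 0 \<and> (\<forall>s\<in>I. (kb s)^2 + (tb s)^2 = c * tb s))"

end

theory Submission
  imports Defs
begin

text \<open>Since \<open>kb = \<kappa> cos \<phi>\<close> and \<open>tb = \<kappa> sin \<phi>\<close>, we have \<open>kb\<^sup>2 + tb\<^sup>2 = \<kappa>\<^sup>2\<close>. The Mannheim
  condition thus reads \<open>\<kappa>\<^sup>2 = c \<kappa> cos \<phi>\<close>, which after cancelling the nonzero \<open>\<kappa>\<close> is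
  \<open>\<kappa> = c cos \<phi>\<close>; conversely \<open>R \<noteq> 0\<close> is forced by \<open>\<kappa> 0 \<noteq> 0\<close>. The B-Mannheim case is the same
  with \<open>sin\<close>.\<close>

lemma polar_sum_squares: "(k * cos \<theta>)\<^sup>2 + (k * sin \<theta>)\<^sup>2 = (k::real)\<^sup>2"
  by (simp add: power_mult_distrib flip: distrib_left)

lemma ex_nonzero_sq_eq_mult_iff:
  fixes k f :: "real \<Rightarrow> real"
  assumes "a \<in> I" and k_nz: "\<And>s. s \<in> I \<Longrightarrow> k s \<noteq> 0"
  shows "(\<exists>c. c \<noteq> 0 \<and> (\<forall>s\<in>I. (k s)\<^sup>2 = c * (k s * f s))) \<longleftrightarrow> (\<exists>R. \<forall>s\<in>I. k s = R * f s)"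
proof
  assume "\<exists>c. c \<noteq> 0 \<and> (\<forall>s\<in>I. (k s)\<^sup>2 = c * (k s * f s))"
  then obtain c where c: "\<forall>s\<in>I. k s * k s = k s * (c * f s)"
    by (auto simp: power2_eq_square algebra_simps)
  have "\<forall>s\<in>I. k s = c * f s"
    using c k_nz by simp
  then show "\<exists>R. \<forall>s\<in>I. k s = R * f s" ..
next
  assume "\<exists>R. \<forall>s\<in>I. k s = R * f s"
  then obtain R where R: "\<forall>s\<in>I. k s = R * f s" ..
  have "R \<noteq> 0"
    using R k_nz \<open>a \<in> I\<close> by force
  moreover have "\<forall>s\<in>I. (k s)\<^sup>2 = R * (k s * f s)"
    using R by (simp add: power2_eq_square algebra_simps)
  ultimately show "\<exists>c. c \<noteq> 0 \<and> (\<forall>s\<in>I. (k s)\<^sup>2 = c * (k s * f s))"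
    by blast
qed

lemma mannheim_curve_polar_iff:
  assumes "a \<in> I" and "\<And>s. s \<in> I \<Longrightarrow> k s \<noteq> 0"
    and "\<And>s. s \<in> I \<Longrightarrow> kb s = k s * cos (\<theta> s)"
    and "\<And>s. s \<in> I \<Longrightarrow> tb s = k s * sin (\<theta> s)"
  shows "mannheim_curve I kb tb \<longleftrightarrow> (\<exists>R. \<forall>s\<in>I. k s = R * cos (\<theta> s))"
proof -
  have "mannheim_curve I kb tb \<longleftrightarrow>
      (\<exists>c. c \<noteq> 0 \<and> (\<forall>s\<in>I. (k s)\<^sup>2 = c * (k s * cos (\<theta> s))))"
    unfolding mannheim_curve_def using assms(3,4) by (simp add: polar_sum_squares)
  also have "\<dots> \<longleftrightarrow> (\<exists>R. \<forall>s\<in>I. k s = R * cos (\<theta> s))"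
    using ex_nonzero_sq_eq_mult_iff assms(1,2) .
  finally show ?thesis .
qed

lemma B_mannheim_curve_polar_iff:
  assumes "a \<in> I" and "\<And>s. s \<in> I \<Longrightarrow> k s \<noteq> 0"
    and "\<And>s. s \<in> I \<Longrightarrow> kb s = k s * cos (\<theta> s)"
    and "\<And>s. s \<in> I \<Longrightarrow> tb s = k s * sin (\<theta> s)"
  shows "B_mannheim_curve I kb tb \<longleftrightarrow> (\<exists>R. \<forall>s\<in>I. k s = R * sin (\<theta> s))"
proof -
  have "B_mannheim_curve I kb tb \<longleftrightarrow>
      (\<exists>c. c \<noteq> 0 \<and> (\<forall>s\<in>I. (k s)\<^sup>2 = c * (k s * sin (\<theta> s))))"
    unfolding B_mannheim_curve_def using assms(3,4) by (simp add: polar_sum_squares)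
  also have "\<dots> \<longleftrightarrow> (\<exists>R. \<forall>s\<in>I. k s = R * sin (\<theta> s))"
    using ex_nonzero_sq_eq_mult_iff assms(1,2) .
  finally show ?thesis .
qed

theorem mainTheorem5:
  fixes I :: "real set"
    and \<gamma> T N B \<beta> Tb :: "real \<Rightarrow> real^3"
    and \<kappa> \<tau> kb tb :: "real \<Rightarrow> real"
    and \<phi>0 :: real
  assumes I: "is_interval I" "0 \<in> I"
    \<comment> \<open>M: unit speed curve gamma with Frenet frame T, N, B, curvature kappa /= 0, torsion tau\<close>
    and gT: "\<And>s. s \<in> I \<Longrightarrow> (\<gamma> has_vector_derivative T s) (at s within I)"
    and frame: "\<And>s. s \<in> I \<Longrightarrow> norm (T s) = 1 \<and> norm (N s) = 1 \<and> T s \<bullet> N s = 0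
                                  \<and> B s = cross3 (T s) (N s)"
    and FS_T: "\<And>s. s \<in> I \<Longrightarrow> (T has_vector_derivative (\<kappa> s *\<^sub>R N s)) (at s within I)"
    and FS_N: "\<And>s. s \<in> I \<Longrightarrow>
                 (N has_vector_derivative (- \<kappa> s *\<^sub>R T s + \<tau> s *\<^sub>R B s)) (at s within I)"
    and FS_B: "\<And>s. s \<in> I \<Longrightarrow> (B has_vector_derivative (- \<tau> s *\<^sub>R N s)) (at s within I)"
    and k_nz: "\<And>s. s \<in> I \<Longrightarrow> \<kappa> s \<noteq> 0"
    \<comment> \<open>K: curve beta with the same arc-length parameter, beta'' = kb * gamma',
        Frenet frame (Tb, T, cross3 Tb T), curvature kb and torsion tb\<close>
    and bT: "\<And>s. s \<in> I \<Longrightarrow> (\<beta> has_vector_derivative Tb s) (at s within I)"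
    and bunit: "\<And>s. s \<in> I \<Longrightarrow> norm (Tb s) = 1"
    and bFS_T: "\<And>s. s \<in> I \<Longrightarrow> (Tb has_vector_derivative (kb s *\<^sub>R T s)) (at s within I)"
    and bFS_N: "\<And>s. s \<in> I \<Longrightarrow>
                 (T has_vector_derivative (- kb s *\<^sub>R Tb s + tb s *\<^sub>R cross3 (Tb s) (T s))) (at s within I)"
    and kb_def: "\<And>s. s \<in> I \<Longrightarrow> kb s = \<kappa> s * cos (oint 0 s \<tau> + \<phi>0)"
    and tb_def: "\<And>s. s \<in> I \<Longrightarrow> tb s = \<kappa> s * sin (oint 0 s \<tau> + \<phi>0)"
  shows "(mannheim_curve I kb tb \<longleftrightarrow>
            (\<exists>R. \<forall>s\<in>I. \<kappa> s = R * cos (oint 0 s \<tau> + \<phi>0)))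
       \<and> (B_mannheim_curve I kb tb \<longleftrightarrow>
            (\<exists>R. \<forall>s\<in>I. \<kappa> s = R * sin (oint 0 s \<tau> + \<phi>0)))"
  by (intro conjI mannheim_curve_polar_iff[OF I(2)] B_mannheim_curve_polar_iff[OF I(2)])
    (simp_all add: k_nz kb_def tb_def)

end
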